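(* Let $u:\mathbb{R}^n\to(0,\infty)$ be a measurable function such that $u(x+y)\le u(x)\,u(y)$ for all $x,y\in\mathbb{R}^n$, and let $\Phi$ be a Young function. For $x\in\mathbb{R}^n$ and a function $f$ let $T_xf(y)=f(y-x)$. Then: (1) for all $f\in L^u_\Phi(\mathbb{R}^n)$ and all $x\in\mathbb{R}^n$, $\|T_xf\|_{L^u_\Phi(\mathbb{R}^n)}\le u(x)\|f\|_{L^u_\Phi(\mathbb{R}^n)}$; (2) if $f\in L^u_\Phi(\mathbb{R}^n)$ and $f\neq0$, then there exists a constant $C>0$ (depending on $f$) such that $\frac{u(x)}{C}\le \|T_xf\|_{L^u_\Phi(\mathbb{R}^n)}\le C\,u(x)$ for all $x\in\mathbb{R}^n$.
   Context: A Young function is a map $\Phi:[0,\infty)\to[0,\infty)$ that is convex, left-continuous, satisfies $\lim_{t\to0}\Phi(t)=0=\Phi(0)$ and $\lim_{t\to\infty}\Phi(t)=\infty$. For a Young function $\Phi$ and a measurable $u:\mathbb{R}^n\to(0,\infty)$, the weighted Orlicz space $L^u_\Phi(\mathbb{R}^n)$ is the set of measurable $f:\mathbb{R}^n\to\mathbb{R}$ such that $\int_{\mathbb{R}^n}\Phi(a|u(x)f(x)|)\,dx<\infty$ for some $a>0$, with norm $\|f\|_{L^u_\Phi(\mathbb{R}^n)}=\inf\{b>0:\int_{\mathbb{R}^n}\Phi(|u(x)f(x)|/b)\,dx\le1\}$ (Lebesgue measure). *)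

theory Defs
  imports "HOL-Analysis.Analysis"
begin

definition young_function :: "(real \<Rightarrow> real) \<Rightarrow> bool" where
  "young_function \<Phi> \<longleftrightarrow>
     (\<forall>t\<ge>0. \<Phi> t \<ge> 0) \<and>
     convex_on {0..} \<Phi> \<and>
     (\<forall>t>0. (\<Phi> \<longlongrightarrow> \<Phi> t) (at_left t)) \<and>
     \<Phi> 0 = 0 \<and> (\<Phi> \<longlongrightarrow> 0) (at_right 0) \<and>
     filterlim \<Phi> at_top at_top"

definition weighted_orlicz_space ::
  "(real \<Rightarrow> real) \<Rightarrow> ('a::euclidean_space \<Rightarrow> real) \<Rightarrow> ('a \<Rightarrow> real) set" where
  "weighted_orlicz_space \<Phi> u =
     {f. f \<in> borel_measurable lebesgue \<and>
         (\<exists>a>0. (\<integral>\<^sup>+ x. ennreal (\<Phi> (a * \<bar>u x * f x\<bar>)) \<partial>lebesgue) < \<infinity>)}"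

definition orlicz_norm ::
  "(real \<Rightarrow> real) \<Rightarrow> ('a::euclidean_space \<Rightarrow> real) \<Rightarrow> ('a \<Rightarrow> real) \<Rightarrow> real" where
  "orlicz_norm \<Phi> u f =
     Inf {b. b > 0 \<and> (\<integral>\<^sup>+ x. ennreal (\<Phi> (\<bar>u x * f x\<bar> / b)) \<partial>lebesgue) \<le> 1}"

definition translate :: "'a::euclidean_space \<Rightarrow> ('a \<Rightarrow> real) \<Rightarrow> ('a \<Rightarrow> real)" where
  "translate x f = (\<lambda>y. f (y - x))"

end

(*
  Substituting y := x + y in the Luxemburg modular of T_x f and using u (x + y) <= u x * u y
  shows that u x * b is admissible for T_x f whenever b is admissible for f; this gives (1)
  and the upper bound in (2).

  For the lower bound, choose a set E of positive measure on which |f| >= delta and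
  u (-y) <= M. Since u x <= u (x + y) * u (-y), the translated integrand is at least
  Phi (delta * u x / (M * b)) on E, so every admissible b for T_x f satisfies
  Phi (delta * u x / (M * b)) * |E| <= 1. As Phi is unbounded, this forces b >= c * u x
  for a constant c > 0 that does not depend on x.
*)

theory Submission
  imports Defs
begin

lemma young_function_nonneg:
  assumes "young_function \<Phi>" "0 \<le> t"
  shows "0 \<le> \<Phi> t"
  using assms unfolding young_function_def by auto

lemma young_function_scale:
  assumes y: "young_function \<Phi>" and "0 \<le> l" "l \<le> 1" "0 \<le> t"
  shows "\<Phi> (l * t) \<le> l * \<Phi> t"
proof -
  have cv: "convex_on {0..} \<Phi>" and z: "\<Phi> 0 = 0"
    using y unfolding young_function_def by auto
  have "\<Phi> ((1 - l) *\<^sub>R 0 + l *\<^sub>R t) \<le> (1 - l) * \<Phi> 0 + l * \<Phi> t"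
    by (rule convex_onD[OF cv]) (use assms in auto)
  then show ?thesis using z by simp
qed

lemma young_function_mono:
  assumes y: "young_function \<Phi>" and "0 \<le> s" "s \<le> t"
  shows "\<Phi> s \<le> \<Phi> t"
proof (cases "t = 0")
  case True
  then show ?thesis using assms by simp
next
  case False
  then have t: "t > 0" using assms by simp
  have "\<Phi> s = \<Phi> ((s / t) * t)" using t by simp
  also have "\<dots> \<le> (s / t) * \<Phi> t"
    using assms t by (intro young_function_scale) auto
  also have "\<dots> \<le> \<Phi> t"
    using assms t young_function_nonneg[OF y, of t]
    by (intro mult_left_le_one_le) auto
  finally show ?thesis .
qed

lemma young_function_exceeds:
  assumes "young_function \<Phi>"
  obtains t where "t > 0" "c \<le> \<Phi> t"
proof -
  have "eventually (\<lambda>t. c \<le> \<Phi> t) at_top"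
    using assms unfolding young_function_def filterlim_at_top by blast
  then obtain N where "\<And>t. t \<ge> N \<Longrightarrow> c \<le> \<Phi> t"
    unfolding eventually_at_top_linorder by blast
  then show ?thesis using that[of "max N 1"] by simp
qed

lemma young_function_times_positive_exceeds_one:
  assumes y: "young_function \<Phi>" and e: "0 < (e :: ennreal)"
  obtains t where "t > 0" "1 < ennreal (\<Phi> t) * e"
proof -
  obtain r where r: "0 < ennreal (real_of_rat r)" "ennreal (real_of_rat r) < e"
    using ennreal_rat_dense[OF e] by blast
  define c where "c = real_of_rat r"
  have c: "0 < c" using r(1) unfolding c_def by (simp add: ennreal_less_iff)
  obtain t where t: "t > 0" "2 / c \<le> \<Phi> t"
    using young_function_exceeds[OF y] by blast
  have "1 < ennreal (2 / c * c)" using c by simp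
  also have "\<dots> = ennreal (2 / c) * ennreal c" using c by (intro ennreal_mult) auto
  also have "\<dots> \<le> ennreal (\<Phi> t) * e"
    using t r(2) unfolding c_def by (intro mult_mono ennreal_leI) auto
  finally show ?thesis using that t(1) by blast
qed

lemma borel_measurable_young_function_comp:
  assumes y: "young_function \<Phi>" and h: "h \<in> borel_measurable M" and nn: "\<And>x. 0 \<le> h x"
  shows "(\<lambda>x. ennreal (\<Phi> (h x))) \<in> borel_measurable M"
proof -
  have "(\<lambda>t. \<Phi> (max 0 t)) \<in> borel_measurable borel"
    by (rule borel_measurable_mono) (auto simp: mono_def intro!: young_function_mono[OF y])
  from measurable_compose[OF h this] show ?thesis
    using nn by (simp add: max_absorb2)
qed

lemma young_function_Markov_inequality:
  assumes y: "young_function \<Phi>" and A: "A \<in> sets M" and "0 \<le> t"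
    and ge: "\<And>x. x \<in> A \<Longrightarrow> t \<le> h x"
  shows "ennreal (\<Phi> t) * emeasure M A \<le> (\<integral>\<^sup>+ x. ennreal (\<Phi> (h x)) \<partial>M)"
proof -
  have "ennreal (\<Phi> t) * emeasure M A = (\<integral>\<^sup>+ x. ennreal (\<Phi> t) * indicator A x \<partial>M)"
    by (rule nn_integral_cmult_indicator[OF A, symmetric])
  also have "\<dots> \<le> (\<integral>\<^sup>+ x. ennreal (\<Phi> (h x)) \<partial>M)"
    using ge \<open>0 \<le> t\<close>
    by (intro nn_integral_mono) (auto simp: indicator_def intro!: ennreal_leI young_function_mono[OF y])
  finally show ?thesis .
qed

lemma not_AE_zero_bounded_on_positive_set:
  fixes f g :: "'a \<Rightarrow> real"
  assumes [measurable]: "f \<in> borel_measurable M" "g \<in> borel_measurable M"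
    and nz: "\<not> (AE x in M. f x = 0)"
  obtains E \<delta> c where "E \<in> sets M" "0 < emeasure M E" "0 < \<delta>"
    "\<And>x. x \<in> E \<Longrightarrow> \<delta> \<le> \<bar>f x\<bar> \<and> g x \<le> c"
proof -
  define E where "E n = {x \<in> space M. 1 / (real n + 1) \<le> \<bar>f x\<bar> \<and> g x \<le> real n}" for n :: nat
  have E_sets: "E n \<in> sets M" for n unfolding E_def by measurable
  have cover: "{x \<in> space M. f x \<noteq> 0} \<subseteq> (\<Union>n. E n)"
  proof
    fix x assume x: "x \<in> {x \<in> space M. f x \<noteq> 0}"
    obtain n :: nat where n: "max (g x) (1 / \<bar>f x\<bar>) < real n"
      using reals_Archimedean2 by blast
    have "0 < \<bar>f x\<bar>" using x by simp
    moreover have "1 / \<bar>f x\<bar> < real n + 1" using n by simp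
    ultimately have "1 < (real n + 1) * \<bar>f x\<bar>" by (simp add: divide_less_eq)
    then have "1 / (real n + 1) \<le> \<bar>f x\<bar>" by (simp add: divide_le_eq mult.commute)
    with n x have "x \<in> E n" unfolding E_def by simp
    then show "x \<in> (\<Union>n. E n)" by blast
  qed
  have "\<exists>n. E n \<notin> null_sets M"
  proof (rule ccontr)
    assume "\<nexists>n. E n \<notin> null_sets M"
    then have "(\<Union>n. E n) \<in> null_sets M" by (intro null_sets_UN) blast
    then have "AE x in M. f x = 0" using cover by (rule AE_I')
    with nz show False ..
  qed
  then obtain n where "E n \<notin> null_sets M" ..
  then have "0 < emeasure M (E n)"
    using E_sets[of n] by (simp add: null_sets_def zero_less_iff_neq_zero)
  then show ?thesis
    by (rule that[OF E_sets]) (auto simp: E_def)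
qed

lemma measurable_lebesgue_translation:
  "(\<lambda>y. t + y) \<in> lebesgue \<rightarrow>\<^sub>M (lebesgue :: 'a::euclidean_space measure)"
  using lebesgue_affine_measurable[of "\<lambda>_. 1" t] by (simp add: euclidean_representation)

lemma nn_integral_lebesgue_translation:
  fixes g :: "'a::euclidean_space \<Rightarrow> ennreal"
  assumes g: "g \<in> borel_measurable lebesgue"
  shows "(\<integral>\<^sup>+ y. g (t + y) \<partial>lebesgue) = (\<integral>\<^sup>+ y. g y \<partial>lebesgue)"
proof -
  have "lebesgue = distr lebesgue lebesgue (\<lambda>y::'a. t + y)"
    using lebesgue_affine_euclidean[of "\<lambda>_. 1" t]
    by (simp add: density_1 euclidean_representation)
  then have "(\<integral>\<^sup>+ y. g y \<partial>lebesgue) = (\<integral>\<^sup>+ y. g y \<partial>distr lebesgue lebesgue (\<lambda>y::'a. t + y))"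
    by simp
  also have "\<dots> = (\<integral>\<^sup>+ y. g (t + y) \<partial>lebesgue)"
    using g by (intro nn_integral_distr[OF measurable_lebesgue_translation]) simp
  finally show ?thesis ..
qed

lemma orlicz_modular_translate:
  fixes u f :: "'a::euclidean_space \<Rightarrow> real"
  assumes y: "young_function \<Phi>" and "u \<in> borel_measurable lebesgue" "f \<in> borel_measurable lebesgue"
    and "0 \<le> b"
  shows "(\<integral>\<^sup>+ y. ennreal (\<Phi> (\<bar>u y * translate x f y\<bar> / b)) \<partial>lebesgue)
       = (\<integral>\<^sup>+ y. ennreal (\<Phi> (\<bar>u (x + y) * f y\<bar> / b)) \<partial>lebesgue)"
proof -
  have "translate x f = f \<circ> (\<lambda>y. - x + y)"
    by (simp add: translate_def fun_eq_iff)
  then have "translate x f \<in> borel_measurable lebesgue"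
    using measurable_comp[OF measurable_lebesgue_translation] assms by metis
  then have "(\<lambda>y. ennreal (\<Phi> (\<bar>u y * translate x f y\<bar> / b))) \<in> borel_measurable lebesgue"
    using assms by (intro borel_measurable_young_function_comp) auto
  from nn_integral_lebesgue_translation[OF this, of x] show ?thesis
    by (simp add: translate_def)
qed

definition orlicz_admissible ::
  "(real \<Rightarrow> real) \<Rightarrow> ('a::euclidean_space \<Rightarrow> real) \<Rightarrow> ('a \<Rightarrow> real) \<Rightarrow> real set" where
  "orlicz_admissible \<Phi> u f =
     {b. b > 0 \<and> (\<integral>\<^sup>+ x. ennreal (\<Phi> (\<bar>u x * f x\<bar> / b)) \<partial>lebesgue) \<le> 1}"

lemma orlicz_norm_le:
  "b \<in> orlicz_admissible \<Phi> u f \<Longrightarrow> orlicz_norm \<Phi> u f \<le> b"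
  unfolding orlicz_norm_def orlicz_admissible_def
  by (rule cInf_lower) (auto intro: bdd_belowI[of _ 0])

lemma orlicz_norm_greatest:
  "orlicz_admissible \<Phi> u f \<noteq> {} \<Longrightarrow> (\<And>b. b \<in> orlicz_admissible \<Phi> u f \<Longrightarrow> c \<le> b)
    \<Longrightarrow> c \<le> orlicz_norm \<Phi> u f"
  unfolding orlicz_norm_def orlicz_admissible_def by (rule cInf_greatest)

lemma orlicz_norm_nonneg:
  "orlicz_admissible \<Phi> u f \<noteq> {} \<Longrightarrow> 0 \<le> orlicz_norm \<Phi> u f"
  by (rule orlicz_norm_greatest) (auto simp: orlicz_admissible_def)

lemma orlicz_admissible_nonempty:
  fixes u :: "'a::euclidean_space \<Rightarrow> real"
  assumes y: "young_function \<Phi>" and um: "u \<in> borel_measurable lebesgue"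
    and f: "f \<in> weighted_orlicz_space \<Phi> u"
  shows "orlicz_admissible \<Phi> u f \<noteq> {}"
proof -
  obtain a where fm: "f \<in> borel_measurable lebesgue" and a: "a > 0"
    and fin: "(\<integral>\<^sup>+ x. ennreal (\<Phi> (a * \<bar>u x * f x\<bar>)) \<partial>lebesgue) < \<infinity>"
    using f unfolding weighted_orlicz_space_def by auto
  then obtain r where r: "0 \<le> r" "(\<integral>\<^sup>+ x. ennreal (\<Phi> (a * \<bar>u x * f x\<bar>)) \<partial>lebesgue) = ennreal r"
    using less_top_ennreal by auto
  define l where "l = 1 / (1 + r)"
  have l: "0 < l" "l \<le> 1" using r unfolding l_def by auto
  define b where "b = (1 + r) / a"
  have "(\<integral>\<^sup>+ x. ennreal (\<Phi> (\<bar>u x * f x\<bar> / b)) \<partial>lebesgue)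
      \<le> (\<integral>\<^sup>+ x. ennreal l * ennreal (\<Phi> (a * \<bar>u x * f x\<bar>)) \<partial>lebesgue)"
  proof (rule nn_integral_mono)
    fix x
    have "\<bar>u x * f x\<bar> / b = l * (a * \<bar>u x * f x\<bar>)"
      unfolding b_def l_def using a r by (simp add: field_simps)
    also have "\<Phi> \<dots> \<le> l * \<Phi> (a * \<bar>u x * f x\<bar>)"
      using l a by (intro young_function_scale[OF y]) auto
    finally show "ennreal (\<Phi> (\<bar>u x * f x\<bar> / b)) \<le> ennreal l * ennreal (\<Phi> (a * \<bar>u x * f x\<bar>))"
      using l by (simp add: ennreal_mult'[symmetric] ennreal_leI)
  qed
  also have "\<dots> = ennreal l * ennreal r"
    using r um fm a by (subst nn_integral_cmult) (auto intro!: borel_measurable_young_function_comp[OF y])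
  also have "\<dots> \<le> 1" using r l unfolding l_def by (simp add: ennreal_mult[symmetric])
  finally have "b \<in> orlicz_admissible \<Phi> u f"
    using a r unfolding orlicz_admissible_def b_def by auto
  then show ?thesis by blast
qed

locale weighted_orlicz =
  fixes \<Phi> :: "real \<Rightarrow> real" and u :: "'a::euclidean_space \<Rightarrow> real"
  assumes young: "young_function \<Phi>"
    and u_meas: "u \<in> borel_measurable lebesgue"
    and u_pos: "\<And>x. 0 < u x"
    and u_submult: "\<And>x y. u (x + y) \<le> u x * u y"
begin

lemma translate_orlicz_admissible:
  assumes fm: "f \<in> borel_measurable lebesgue" and b: "b \<in> orlicz_admissible \<Phi> u f"
  shows "u x * b \<in> orlicz_admissible \<Phi> u (translate x f)"
proof -
  have b0: "b > 0" using b unfolding orlicz_admissible_def by auto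
  have "(\<integral>\<^sup>+ y. ennreal (\<Phi> (\<bar>u y * translate x f y\<bar> / (u x * b))) \<partial>lebesgue)
      = (\<integral>\<^sup>+ y. ennreal (\<Phi> (\<bar>u (x + y) * f y\<bar> / (u x * b))) \<partial>lebesgue)"
    using u_pos[of x] b0 by (intro orlicz_modular_translate[OF young u_meas fm]) simp
  also have "\<dots> \<le> (\<integral>\<^sup>+ y. ennreal (\<Phi> (\<bar>u y * f y\<bar> / b)) \<partial>lebesgue)"
  proof (intro nn_integral_mono ennreal_leI young_function_mono[OF young])
    fix y
    have "u (x + y) * \<bar>f y\<bar> \<le> u x * u y * \<bar>f y\<bar>"
      using u_submult[of x y] by (rule mult_right_mono) simp
    then show "\<bar>u (x + y) * f y\<bar> / (u x * b) \<le> \<bar>u y * f y\<bar> / b"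
      using u_pos[of x] u_pos[of y] u_pos[of "x + y"] b0
      by (simp add: abs_mult divide_simps mult_ac)
  qed (use u_pos[of x] b0 in simp)
  also have "\<dots> \<le> 1" using b unfolding orlicz_admissible_def by auto
  finally show ?thesis using b0 u_pos[of x] unfolding orlicz_admissible_def by auto
qed

lemma orlicz_admissible_translate_nonempty:
  assumes "f \<in> weighted_orlicz_space \<Phi> u"
  shows "orlicz_admissible \<Phi> u (translate x f) \<noteq> {}"
  using orlicz_admissible_nonempty[OF young u_meas assms] translate_orlicz_admissible assms
  unfolding weighted_orlicz_space_def by blast

lemma orlicz_norm_translate_le:
  assumes f: "f \<in> weighted_orlicz_space \<Phi> u"
  shows "orlicz_norm \<Phi> u (translate x f) \<le> u x * orlicz_norm \<Phi> u f"
proof -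
  have fm: "f \<in> borel_measurable lebesgue"
    using f unfolding weighted_orlicz_space_def by auto
  have "orlicz_norm \<Phi> u (translate x f) / u x \<le> orlicz_norm \<Phi> u f"
  proof (rule orlicz_norm_greatest[OF orlicz_admissible_nonempty[OF young u_meas f]])
    fix b assume "b \<in> orlicz_admissible \<Phi> u f"
    then have "orlicz_norm \<Phi> u (translate x f) \<le> u x * b"
      by (intro orlicz_norm_le translate_orlicz_admissible fm)
    then show "orlicz_norm \<Phi> u (translate x f) / u x \<le> b"
      using u_pos[of x] by (simp add: divide_le_eq mult.commute)
  qed
  then show ?thesis using u_pos[of x] by (simp add: divide_le_eq mult.commute)
qed

lemma translate_orlicz_admissible_bound:
  assumes fm: "f \<in> borel_measurable lebesgue" and E: "E \<in> sets lebesgue"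
    and \<delta>: "0 < \<delta>" and M: "0 < M" and bound: "\<And>y. y \<in> E \<Longrightarrow> \<delta> \<le> \<bar>f y\<bar> \<and> u (- y) \<le> M"
    and b: "b \<in> orlicz_admissible \<Phi> u (translate x f)"
  shows "ennreal (\<Phi> (u x * \<delta> / (M * b))) * emeasure lebesgue E \<le> 1"
proof -
  have b0: "0 < b" using b by (simp add: orlicz_admissible_def)
  have "u x * \<delta> / (M * b) \<le> \<bar>u (x + y) * f y\<bar> / b" if "y \<in> E" for y
  proof -
    have "u x \<le> u (x + y) * u (- y)" using u_submult[of "x + y" "- y"] by simp
    also have "\<dots> \<le> u (x + y) * M"
      using bound[OF that] u_pos[of "x + y"] by (intro mult_left_mono) auto
    finally have "u x * \<delta> \<le> u (x + y) * M * \<bar>f y\<bar>"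
      using bound[OF that] \<delta> u_pos[of x] by (intro mult_mono) auto
    then have "u x * \<delta> / M \<le> \<bar>u (x + y) * f y\<bar>"
      using M u_pos[of "x + y"] by (simp add: abs_mult pos_divide_le_eq mult_ac)
    then show ?thesis
      using b0 by (simp add: divide_right_mono flip: divide_divide_eq_left)
  qed
  then have "ennreal (\<Phi> (u x * \<delta> / (M * b))) * emeasure lebesgue E
      \<le> (\<integral>\<^sup>+ y. ennreal (\<Phi> (\<bar>u (x + y) * f y\<bar> / b)) \<partial>lebesgue)"
    using \<delta> M b0 u_pos[of x] by (intro young_function_Markov_inequality[OF young E]) auto
  also have "\<dots> = (\<integral>\<^sup>+ y. ennreal (\<Phi> (\<bar>u y * translate x f y\<bar> / b)) \<partial>lebesgue)"
    using b0 by (intro orlicz_modular_translate[OF young u_meas fm, symmetric]) simp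
  also have "\<dots> \<le> 1" using b by (simp add: orlicz_admissible_def)
  finally show ?thesis .
qed

lemma orlicz_norm_translate_ge:
  assumes f: "f \<in> weighted_orlicz_space \<Phi> u" and nz: "\<not> (AE x in lebesgue. f x = 0)"
  obtains c where "c > 0" "\<And>x. c * u x \<le> orlicz_norm \<Phi> u (translate x f)"
proof -
  have fm: "f \<in> borel_measurable lebesgue"
    using f unfolding weighted_orlicz_space_def by auto
  have "(\<lambda>y. u (- y)) \<in> borel_measurable lebesgue"
    using measurable_compose[OF lebesgue_measurable_scaling[of "-1"] u_meas] by (simp add: o_def)
  then obtain E \<delta> M where E: "E \<in> sets lebesgue" "0 < emeasure lebesgue E" and \<delta>: "0 < \<delta>"
    and bound: "\<And>y. y \<in> E \<Longrightarrow> \<delta> \<le> \<bar>f y\<bar> \<and> u (- y) \<le> M"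
    using not_AE_zero_bounded_on_positive_set[OF fm _ nz] by blast
  obtain y0 where "y0 \<in> E" using E(2) ex_in_conv by fastforce
  then have M: "0 < M" using bound u_pos by (meson less_le_trans)
  obtain t where t: "t > 0" "1 < ennreal (\<Phi> t) * emeasure lebesgue E"
    using young_function_times_positive_exceeds_one[OF young E(2)] by blast
  have "\<delta> / (M * t) * u x \<le> orlicz_norm \<Phi> u (translate x f)" for x
  proof (rule orlicz_norm_greatest[OF orlicz_admissible_translate_nonempty[OF f]])
    fix b assume b: "b \<in> orlicz_admissible \<Phi> u (translate x f)"
    have "\<not> t \<le> u x * \<delta> / (M * b)"
    proof
      assume "t \<le> u x * \<delta> / (M * b)"
      then have "ennreal (\<Phi> t) * emeasure lebesgue E
          \<le> ennreal (\<Phi> (u x * \<delta> / (M * b))) * emeasure lebesgue E"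
        using t by (intro mult_right_mono ennreal_leI young_function_mono[OF young]) auto
      also have "\<dots> \<le> 1"
        by (rule translate_orlicz_admissible_bound[OF fm E(1) \<delta> M bound b])
      finally show False using t(2) by simp
    qed
    then show "\<delta> / (M * t) * u x \<le> b"
      using b M t by (simp add: orlicz_admissible_def field_simps)
  qed
  then show ?thesis using that[of "\<delta> / (M * t)"] M t \<delta> by simp
qed

end

theorem lemma2p6:
  fixes u :: "'a::euclidean_space \<Rightarrow> real" and \<Phi> :: "real \<Rightarrow> real"
  assumes u_meas: "u \<in> borel_measurable lebesgue"
    and u_pos: "\<And>x. u x > 0"
    and u_submult: "\<And>x y. u (x + y) \<le> u x * u y"
    and young: "young_function \<Phi>"
  shows "(\<forall>f \<in> weighted_orlicz_space \<Phi> u. \<forall>x.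
            orlicz_norm \<Phi> u (translate x f) \<le> u x * orlicz_norm \<Phi> u f)
       \<and> (\<forall>f \<in> weighted_orlicz_space \<Phi> u. \<not> (AE x in lebesgue. f x = 0) \<longrightarrow>
            (\<exists>C>0. \<forall>x. u x / C \<le> orlicz_norm \<Phi> u (translate x f)
                        \<and> orlicz_norm \<Phi> u (translate x f) \<le> C * u x))"
proof -
  interpret weighted_orlicz \<Phi> u
    using assms by unfold_locales auto
  have "\<exists>C>0. \<forall>x. u x / C \<le> orlicz_norm \<Phi> u (translate x f)
                \<and> orlicz_norm \<Phi> u (translate x f) \<le> C * u x"
    if f: "f \<in> weighted_orlicz_space \<Phi> u" and nz: "\<not> (AE x in lebesgue. f x = 0)" for f
  proof -
    obtain c where c: "c > 0" "\<And>x. c * u x \<le> orlicz_norm \<Phi> u (translate x f)"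
      using orlicz_norm_translate_ge[OF f nz] by blast
    define C where "C = 1 / c + orlicz_norm \<Phi> u f"
    have "0 \<le> orlicz_norm \<Phi> u f"
      by (rule orlicz_norm_nonneg[OF orlicz_admissible_nonempty[OF young u_meas f]])
    then have C: "0 < C" "1 \<le> C * c" "orlicz_norm \<Phi> u f \<le> C"
      unfolding C_def using c(1) by (auto simp: add_pos_nonneg distrib_right)
    have "u x / C \<le> c * u x" for x
      using C u_pos[of x] by (simp add: field_simps)
    moreover have "u x * orlicz_norm \<Phi> u f \<le> C * u x" for x
      using C(3) u_pos[of x] by (simp add: mult.commute)
    ultimately show ?thesis
      using C(1) c(2) orlicz_norm_translate_le[OF f] by (meson order_trans)
  qed
  then show ?thesis using orlicz_norm_translate_le by blast
qed

end
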